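(* Let $\mathbf{A}$ be a $(K_1,F_1,Z_1,S_1)$ PDA and $\mathbf{B}$ a $(K_2,F_2,Z_2,S_2)$ PDA. Then there exist integer sets $\mathcal{S}_\mathrm{m},\mathcal{S}_1,\ldots,\mathcal{S}_{K_1}$ and a $(K_1,K_2;F_1F_2;Z_1F_2,Z_2F_1;\mathcal{S}_\mathrm{m},\mathcal{S}_1,\ldots,\mathcal{S}_{K_1})$ HPDA such that $$\Big|\bigcup_{k_1=1}^{K_1}\mathcal{S}_{k_1}\Big|-|\mathcal{S}_\mathrm{m}|=S_1S_2,\qquad |\mathcal{S}_{k_1}|=F_1S_2\ \text{ for all }k_1\in[K_1].$$ Consequently, for every $N\ge K_1K_2$ there is an $F_1F_2$-division coded caching scheme with uncoded placement for the $(K_1,K_2;M_1,M_2;N)$ hierarchical caching system with $\frac{M_1}{N}=\frac{Z_1}{F_1}$, $\frac{M_2}{N}=\frac{Z_2}{F_2}$ and loads $$R_1=\frac{S_1S_2}{F_1F_2},\qquad R_2=\frac{S_2}{F_2}.$$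
   Context: Notation: $[a]=\{1,\ldots,a\}$. PDA. For positive integers $K,F,Z,S$ and an integer set $\mathcal{S}$ with $|\mathcal{S}|=S$, an $F\times K$ array $\mathbf{Q}=(q_{j,k})$ with entries in $\{*\}\cup\mathcal{S}$ is a $(K,F,Z,S)$ placement delivery array (PDA) (over $\mathcal{S}$; by default $\mathcal{S}=[S]$) if: (C1) the symbol $*$ appears exactly $Z$ times in each column; (C2) each integer of $\mathcal{S}$ occurs at least once in the array; (C3) for two distinct entries $q_{j_1,k_1}=q_{j_2,k_2}=s$ with $s$ an integer, we have $j_1\ne j_2$, $k_1\ne k_2$, and $q_{j_1,k_2}=q_{j_2,k_1}=*$. HPDA. Let $K_1,K_2,F,Z_1,Z_2$ be positive integers with $Z_1<F$, $Z_2<F$, and let $\mathcal{S}_\mathrm{m},\mathcal{S}_1,\ldots,\mathcal{S}_{K_1}$ be sets of integers. An $F\times(K_1+K_1K_2)$ array $\mathbf{P}=(\mathbf{P}^{(0)},\mathbf{P}^{(1)},\ldots,\mathbf{P}^{(K_1)})$, where $\mathbf{P}^{(0)}=(p^{(0)}_{j,k_1})_{j\in[F],k_1\in[K_1]}$ has every entry equal to $*$ or to "null" (blank), and for each $k_1\in[K_1]$, $\mathbf{P}^{(k_1)}=(p^{(k_1)}_{j,k_2})_{j\in[F],k_2\in[K_2]}$ has entries in $\{*\}\cup\mathcal{S}_{k_1}$, is a $(K_1,K_2;F;Z_1,Z_2;\mathcal{S}_\mathrm{m},\mathcal{S}_1,\ldots,\mathcal{S}_{K_1})$ hierarchical placement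 delivery array (HPDA) if: (B1) each column of $\mathbf{P}^{(0)}$ contains exactly $Z_1$ stars; (B2) for each $k_1\in[K_1]$, $\mathbf{P}^{(k_1)}$ is a $(K_2,F,Z_2,|\mathcal{S}_{k_1}|)$ PDA over $\mathcal{S}_{k_1}$; (B3) each integer $s\in\mathcal{S}_\mathrm{m}$ occurs in exactly one of the subarrays $\mathbf{P}^{(1)},\ldots,\mathbf{P}^{(K_1)}$, and whenever $p^{(k_1)}_{j,k_2}=s\in\mathcal{S}_\mathrm{m}$ we have $p^{(0)}_{j,k_1}=*$; (B4) for any $k_1\ne k_1'\in[K_1]$, $j,j'\in[F]$, $k_2,k_2'\in[K_2]$ with $p^{(k_1)}_{j,k_2}=p^{(k_1')}_{j',k_2'}$ an integer: if $p^{(k_1)}_{j',k_2}$ is an integer then $p^{(0)}_{j',k_1}=*$; and if $p^{(k_1')}_{j,k_2'}$ is an integer then $p^{(0)}_{j,k_1'}=*$. Hierarchical caching model $(K_1,K_2;M_1,M_2;N)$. A server stores $N$ independent files $W_1,\ldots,W_N$, each uniformly distributed on $B$ bits. There are $K_1$ mirror sites, each with a cache of $M_1B$ bits, and $K_1K_2$ users $U_{k_1,k_2}$ ($k_1\in[K_1]$, $k_2\in[K_2]$), each with a cache of $M_2B$ bits; user $U_{k_1,k_2}$ is attached to mirror site $k_1$. The server reaches all mirror sites through one error-free broadcast link; mirror site $k_1$ reaches its $K_2$ attached users through an error-free broadcast link. An $F$-division scheme with uncoded placement ($F\mid B$): each file $W_n$ is split into $F$ packets $W_{n,1},\ldots,W_{n,F}$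 of $B/F$ bits. In the placement phase (without knowledge of demands) mirror site $k_1$ stores a set $\mathcal{Z}_{k_1}$ of packets of total size at most $M_1B$ bits and user $U_{k_1,k_2}$ stores a set $\mathcal{Z}_{(k_1,k_2)}$ of packets of total size at most $M_2B$ bits. In the delivery phase, given a demand vector $\mathbf{d}=(d_{k_1,k_2})\in[N]^{K_1K_2}$, the server broadcasts to the mirror sites a message $X$ consisting of $S(\mathbf{d})$ packet-sized symbols, a function of the files and $\mathbf{d}$; each mirror site $k_1$ broadcasts to its attached users a message $X_{k_1}$ of $S_{k_1}(\mathbf{d})$ packet-sized symbols, a function of $X$, $\mathcal{Z}_{k_1}$ and $\mathbf{d}$; each user $U_{k_1,k_2}$ must recover $W_{d_{k_1,k_2}}$ from $X_{k_1}$, $\mathcal{Z}_{(k_1,k_2)}$ and $\mathbf{d}$. The loads are $R_1=\max_{\mathbf{d}}S(\mathbf{d})/F$ and $R_2=\max_{k_1,\mathbf{d}}S_{k_1}(\mathbf{d})/F$. *)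

theory Defs
  imports Main "HOL.Real"
begin

datatype entry = Star | Val int

datatype mentry = MStar | MNull

text \<open>An F x K array is a function Q with Q j k the entry in row j (1..F), column k (1..K).
  (K,F,Z,S) PDA over the integer set SS, with |SS| = S.\<close>
definition is_PDA :: "nat \<Rightarrow> nat \<Rightarrow> nat \<Rightarrow> nat \<Rightarrow> int set \<Rightarrow> (nat \<Rightarrow> nat \<Rightarrow> entry) \<Rightarrow> bool" where
  "is_PDA K F Z S SS Q \<longleftrightarrow>
     0 < K \<and> 0 < F \<and> 0 < Z \<and> 0 < S \<and> finite SS \<and> card SS = S \<and>
     (\<forall>j\<in>{1..F}. \<forall>k\<in>{1..K}. Q j k = Star \<or> (\<exists>s\<in>SS. Q j k = Val s)) \<and>
     (\<forall>k\<in>{1..K}. card {j\<in>{1..F}. Q j k = Star} = Z) \<and>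
     (\<forall>s\<in>SS. \<exists>j\<in>{1..F}. \<exists>k\<in>{1..K}. Q j k = Val s) \<and>
     (\<forall>j1\<in>{1..F}. \<forall>j2\<in>{1..F}. \<forall>k1\<in>{1..K}. \<forall>k2\<in>{1..K}. \<forall>s.
        Q j1 k1 = Val s \<and> Q j2 k2 = Val s \<and> (j1, k1) \<noteq> (j2, k2) \<longrightarrow>
        j1 \<noteq> j2 \<and> k1 \<noteq> k2 \<and> Q j1 k2 = Star \<and> Q j2 k1 = Star)"

definition is_int_entry :: "entry \<Rightarrow> bool" where
  "is_int_entry e \<longleftrightarrow> e \<noteq> Star"

text \<open>(K1,K2;F;Z1,Z2;Sm,S_1,...,S_K1) HPDA.  P0 j k1 is the entry of P^(0) in row j, column k1;
  P k1 j k2 is the entry of P^(k1) in row j, column k2; Ss k1 is the set S_k1.\<close>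
definition is_HPDA :: "nat \<Rightarrow> nat \<Rightarrow> nat \<Rightarrow> nat \<Rightarrow> nat \<Rightarrow> int set \<Rightarrow> (nat \<Rightarrow> int set)
    \<Rightarrow> (nat \<Rightarrow> nat \<Rightarrow> mentry) \<Rightarrow> (nat \<Rightarrow> nat \<Rightarrow> nat \<Rightarrow> entry) \<Rightarrow> bool" where
  "is_HPDA K1 K2 F Z1 Z2 Sm Ss P0 P \<longleftrightarrow>
     0 < K1 \<and> 0 < K2 \<and> 0 < F \<and> 0 < Z1 \<and> 0 < Z2 \<and> Z1 < F \<and> Z2 < F \<and>
     \<comment> \<open>(B1)\<close>
     (\<forall>k1\<in>{1..K1}. card {j\<in>{1..F}. P0 j k1 = MStar} = Z1) \<and>
     \<comment> \<open>(B2)\<close>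
     (\<forall>k1\<in>{1..K1}. is_PDA K2 F Z2 (card (Ss k1)) (Ss k1) (P k1)) \<and>
     \<comment> \<open>(B3)\<close>
     (\<forall>s\<in>Sm. (\<exists>!k1. k1 \<in> {1..K1} \<and> (\<exists>j\<in>{1..F}. \<exists>k2\<in>{1..K2}. P k1 j k2 = Val s)) \<and>
        (\<forall>k1\<in>{1..K1}. \<forall>j\<in>{1..F}. \<forall>k2\<in>{1..K2}. P k1 j k2 = Val s \<longrightarrow> P0 j k1 = MStar)) \<and>
     \<comment> \<open>(B4)\<close>
     (\<forall>k1\<in>{1..K1}. \<forall>k1'\<in>{1..K1}. \<forall>j\<in>{1..F}. \<forall>j'\<in>{1..F}. \<forall>k2\<in>{1..K2}. \<forall>k2'\<in>{1..K2}. \<forall>s.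
        k1 \<noteq> k1' \<and> P k1 j k2 = Val s \<and> P k1' j' k2' = Val s \<longrightarrow>
        (is_int_entry (P k1 j' k2) \<longrightarrow> P0 j' k1 = MStar) \<and>
        (is_int_entry (P k1' j k2') \<longrightarrow> P0 j k1' = MStar))"

text \<open>A packet is a bit string (bool list) of length B div F.
  A file library W assigns to file n (1..N) and packet index f (1..F) the packet W n f.\<close>

definition valid_library :: "nat \<Rightarrow> nat \<Rightarrow> nat \<Rightarrow> (nat \<Rightarrow> nat \<Rightarrow> bool list) \<Rightarrow> bool" where
  "valid_library N F L W \<longleftrightarrow> (\<forall>n\<in>{1..N}. \<forall>f\<in>{1..F}. length (W n f) = L)"

definition valid_demand :: "nat \<Rightarrow> nat \<Rightarrow> nat \<Rightarrow> (nat \<Rightarrow> nat \<Rightarrow> nat) \<Rightarrow> bool" where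
  "valid_demand K1 K2 N d \<longleftrightarrow> (\<forall>k1\<in>{1..K1}. \<forall>k2\<in>{1..K2}. d k1 k2 \<in> {1..N})"

definition cache_content :: "(nat \<times> nat) set \<Rightarrow> (nat \<Rightarrow> nat \<Rightarrow> bool list) \<Rightarrow> (nat \<Rightarrow> nat \<Rightarrow> bool list)" where
  "cache_content Zc W = (\<lambda>n f. if (n, f) \<in> Zc then W n f else [])"

text \<open>Zm k1: packets cached at mirror k1; Zu k1 k2: packets cached at user U_{k1,k2};
  enc: server encoder (function of demand and files), Sd d its number of packet-sized symbols;
  menc: mirror encoder (function of its index, the demand, the server message and its cache),
  Smir k1 d its number of symbols; dec: user decoder, returns packet f of the requested file.\<close>
definition hier_scheme :: "nat \<Rightarrow> nat \<Rightarrow> real \<Rightarrow> real \<Rightarrow> nat \<Rightarrow> nat \<Rightarrow> nat \<Rightarrow> real \<Rightarrow> real \<Rightarrow> bool" where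
  "hier_scheme K1 K2 M1 M2 N B F R1 R2 \<longleftrightarrow>
     0 < F \<and> F dvd B \<and>
     (\<exists>(Zm :: nat \<Rightarrow> (nat \<times> nat) set) (Zu :: nat \<Rightarrow> nat \<Rightarrow> (nat \<times> nat) set)
        (enc :: (nat \<Rightarrow> nat \<Rightarrow> nat) \<Rightarrow> (nat \<Rightarrow> nat \<Rightarrow> bool list) \<Rightarrow> bool list list)
        (Sd :: (nat \<Rightarrow> nat \<Rightarrow> nat) \<Rightarrow> nat)
        (menc :: nat \<Rightarrow> (nat \<Rightarrow> nat \<Rightarrow> nat) \<Rightarrow> bool list list \<Rightarrow> (nat \<Rightarrow> nat \<Rightarrow> bool list) \<Rightarrow> bool list list)
        (Smir :: nat \<Rightarrow> (nat \<Rightarrow> nat \<Rightarrow> nat) \<Rightarrow> nat)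
        (dec :: nat \<Rightarrow> nat \<Rightarrow> (nat \<Rightarrow> nat \<Rightarrow> nat) \<Rightarrow> bool list list \<Rightarrow> (nat \<Rightarrow> nat \<Rightarrow> bool list) \<Rightarrow> nat \<Rightarrow> bool list).
       \<comment> \<open>placement (independent of the demand), memory constraints\<close>
       (\<forall>k1\<in>{1..K1}. Zm k1 \<subseteq> {1..N} \<times> {1..F} \<and>
           real (card (Zm k1) * (B div F)) \<le> M1 * real B) \<and>
       (\<forall>k1\<in>{1..K1}. \<forall>k2\<in>{1..K2}. Zu k1 k2 \<subseteq> {1..N} \<times> {1..F} \<and>
           real (card (Zu k1 k2) * (B div F)) \<le> M2 * real B) \<and>
       \<comment> \<open>delivery and decodability, for every demand and every realization of the files\<close>
       (\<forall>d W. valid_demand K1 K2 N d \<and> valid_library N F (B div F) W \<longrightarrow>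
          length (enc d W) = Sd d \<and> (\<forall>x\<in>set (enc d W). length x = B div F) \<and>
          (\<forall>k1\<in>{1..K1}.
             length (menc k1 d (enc d W) (cache_content (Zm k1) W)) = Smir k1 d \<and>
             (\<forall>y\<in>set (menc k1 d (enc d W) (cache_content (Zm k1) W)). length y = B div F) \<and>
             (\<forall>k2\<in>{1..K2}. \<forall>f\<in>{1..F}.
                dec k1 k2 d (menc k1 d (enc d W) (cache_content (Zm k1) W))
                    (cache_content (Zu k1 k2) W) f = W (d k1 k2) f))) \<and>
       \<comment> \<open>loads: R1 = max_d S(d)/F, R2 = max_{k1,d} S_k1(d)/F\<close>
       (\<forall>d. valid_demand K1 K2 N d \<longrightarrow> real (Sd d) / real F \<le> R1) \<and>
       (\<exists>d. valid_demand K1 K2 N d \<and> real (Sd d) / real F = R1) \<and>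
       (\<forall>d. \<forall>k1\<in>{1..K1}. valid_demand K1 K2 N d \<longrightarrow> real (Smir k1 d) / real F \<le> R2) \<and>
       (\<exists>d. \<exists>k1\<in>{1..K1}. valid_demand K1 K2 N d \<and> real (Smir k1 d) / real F = R2))"

end

theory Submission
  imports Defs "HOL-Library.Nat_Bijection"
begin

text \<open>Subarray \<open>k1\<close> of the HPDA is the product of column \<open>k1\<close> of \<open>A\<close> with \<open>B\<close>: row \<open>(j1, j2)\<close>,
  column \<open>k2\<close> holds a star where \<open>B\<close> does and otherwise the label pair \<open>(A j1 k1, B j2 k2)\<close>.
  Rows where \<open>A\<close> has a star in column \<open>k1\<close> are cached at mirror \<open>k1\<close>; there the label is renamed
  \<open>(k1, j1, s2)\<close>, giving the mirror-only labels, while the \<open>S1 S2\<close> shared pairs are served by the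
  server. (C3) for \<open>A\<close> and \<open>B\<close> yields the HPDA conditions. The scheme is the two-level XOR
  scheme: for each shared pair the server XORs, along the \<open>s1\<close>-positions of \<open>A\<close>, the mirror
  codewords, each of which XORs the users' packets along the \<open>s2\<close>-positions of \<open>B\<close>; mirrors
  decode by (C3) for \<open>A\<close> and users by (C3) for \<open>B\<close>, giving \<open>S1 S2\<close> and \<open>F1 S2\<close> symbols of size
  \<open>B / (F1 F2)\<close>.\<close>

lemma pda_entry_cases:
  "is_PDA K F Z S SS Q \<Longrightarrow> j \<in> {1..F} \<Longrightarrow> k \<in> {1..K} \<Longrightarrow> Q j k = Star \<or> (\<exists>s\<in>SS. Q j k = Val s)"
  unfolding is_PDA_def by blast

lemma pda_star_count: "is_PDA K F Z S SS Q \<Longrightarrow> k \<in> {1..K} \<Longrightarrow> card {j\<in>{1..F}. Q j k = Star} = Z"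
  unfolding is_PDA_def by blast

lemma pda_label_occurs: "is_PDA K F Z S SS Q \<Longrightarrow> s \<in> SS \<Longrightarrow> \<exists>j\<in>{1..F}. \<exists>k\<in>{1..K}. Q j k = Val s"
  unfolding is_PDA_def by blast

lemma pda_same_label:
  "is_PDA K F Z S SS Q \<Longrightarrow> j1 \<in> {1..F} \<Longrightarrow> j2 \<in> {1..F} \<Longrightarrow> k1 \<in> {1..K} \<Longrightarrow> k2 \<in> {1..K} \<Longrightarrow>
   Q j1 k1 = Val s \<Longrightarrow> Q j2 k2 = Val s \<Longrightarrow> (j1, k1) \<noteq> (j2, k2) \<Longrightarrow>
   j1 \<noteq> j2 \<and> k1 \<noteq> k2 \<and> Q j1 k2 = Star \<and> Q j2 k1 = Star"
  unfolding is_PDA_def by blast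

lemma pda_positive:
  "is_PDA K F Z S SS Q \<Longrightarrow> 0 < K \<and> 0 < F \<and> 0 < Z \<and> 0 < S \<and> finite SS \<and> card SS = S"
  unfolding is_PDA_def by blast

lemma pda_star_count_less:
  assumes pda: "is_PDA K F Z S SS Q"
  shows "Z < F"
proof -
  obtain s where "s \<in> SS" using pda_positive[OF pda] by fastforce
  then obtain j k where jk: "j \<in> {1..F}" "k \<in> {1..K}" "Q j k = Val s"
    using pda_label_occurs[OF pda] by blast
  have "{j'\<in>{1..F}. Q j' k = Star} \<subseteq> {1..F} - {j}" using jk by auto
  then have "card {j'\<in>{1..F}. Q j' k = Star} \<le> card ({1..F} - {j})" by (intro card_mono) auto
  also have "\<dots> = F - 1" using jk by simp
  finally have "card {j'\<in>{1..F}. Q j' k = Star} \<le> F - 1" .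
  then show ?thesis using pda_star_count[OF pda jk(2)] pda_positive[OF pda] by linarith
qed

definition label_positions :: "nat \<Rightarrow> nat \<Rightarrow> (nat \<Rightarrow> nat \<Rightarrow> entry) \<Rightarrow> int \<Rightarrow> (nat \<times> nat) set" where
  "label_positions F K Q s = {(j, k). j \<in> {1..F} \<and> k \<in> {1..K} \<and> Q j k = Val s}"

lemma finite_label_positions [simp]: "finite (label_positions F K Q s)"
  by (rule finite_subset[of _ "{1..F} \<times> {1..K}"]) (auto simp: label_positions_def)

text \<open>Row \<open>j\<close> of a product array with \<open>m\<close> inner rows encodes the pair \<open>(row_fst m j, row_snd m j)\<close>,
  the outer index varying slowest.\<close>

definition row_pair :: "nat \<Rightarrow> nat \<Rightarrow> nat \<Rightarrow> nat" where
  "row_pair m a b = (a - 1) * m + b"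

definition row_fst :: "nat \<Rightarrow> nat \<Rightarrow> nat" where
  "row_fst m j = (j - 1) div m + 1"

definition row_snd :: "nat \<Rightarrow> nat \<Rightarrow> nat" where
  "row_snd m j = (j - 1) mod m + 1"

lemma row_pair_minus_one: "1 \<le> b \<Longrightarrow> row_pair m a b - 1 = (a - 1) * m + (b - 1)"
  by (simp add: row_pair_def)

lemma row_fst_row_pair [simp]: "1 \<le> a \<Longrightarrow> 1 \<le> b \<Longrightarrow> b \<le> m \<Longrightarrow> row_fst m (row_pair m a b) = a"
proof -
  assume "1 \<le> a" "1 \<le> b" "b \<le> m"
  moreover have "b - 1 < m" using \<open>1 \<le> b\<close> \<open>b \<le> m\<close> by simp
  then have "((a - 1) * m + (b - 1)) div m = a - 1" by simp
  ultimately show ?thesis unfolding row_fst_def using row_pair_minus_one[of b m a] by simp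
qed

lemma row_snd_row_pair [simp]: "1 \<le> b \<Longrightarrow> b \<le> m \<Longrightarrow> row_snd m (row_pair m a b) = b"
proof -
  assume "1 \<le> b" "b \<le> m"
  moreover have "b - 1 < m" using \<open>1 \<le> b\<close> \<open>b \<le> m\<close> by simp
  then have "((a - 1) * m + (b - 1)) mod m = b - 1" by simp
  ultimately show ?thesis unfolding row_snd_def using row_pair_minus_one[of b m a] by simp
qed

lemma row_pair_row_fst_row_snd [simp]: "1 \<le> j \<Longrightarrow> row_pair m (row_fst m j) (row_snd m j) = j"
  by (simp add: row_pair_def row_fst_def row_snd_def)

lemma row_pair_in_range: "a \<in> {1..n} \<Longrightarrow> b \<in> {1..m} \<Longrightarrow> row_pair m a b \<in> {1..n * m}"
proof -
  assume a: "a \<in> {1..n}" and b: "b \<in> {1..m}"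
  have "(a - 1) * m + b \<le> (n - 1) * m + m" using a b by (intro add_mono mult_right_mono) auto
  also have "\<dots> = n * m" using a by (cases n) auto
  finally show ?thesis using b by (auto simp: row_pair_def)
qed

lemma row_fst_row_snd_in_range: "j \<in> {1..n * m} \<Longrightarrow> row_fst m j \<in> {1..n} \<and> row_snd m j \<in> {1..m}"
proof -
  assume j: "j \<in> {1..n * m}"
  then have m: "0 < m" by (auto intro: Nat.gr0I)
  have "j - 1 < n * m" using j by auto
  then have "(j - 1) div m < n" using m by (simp add: div_less_iff_less_mult mult.commute)
  moreover have "(j - 1) mod m < m" using m by simp
  ultimately show ?thesis by (auto simp: row_fst_def row_snd_def)
qed

lemma card_rows_product:
  "card {j\<in>{1..n * m}. R (row_fst m j) (row_snd m j)} = card {(a, b). a \<in> {1..n} \<and> b \<in> {1..m} \<and> R a b}"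
proof -
  have "bij_betw (\<lambda>(a, b). row_pair m a b) {(a, b). a \<in> {1..n} \<and> b \<in> {1..m} \<and> R a b}
          {j\<in>{1..n * m}. R (row_fst m j) (row_snd m j)}"
    by (rule bij_betw_byWitness[where f' = "\<lambda>j. (row_fst m j, row_snd m j)"])
      (use row_pair_in_range[of _ n _ m] row_fst_row_snd_in_range[of _ n m] in auto)
  then show ?thesis by (simp add: bij_betw_same_card)
qed

lemma card_rows_row_fst: "card {j\<in>{1..n * m}. P (row_fst m j)} = card {a\<in>{1..n}. P a} * m"
proof -
  have "{(a, b). a \<in> {1..n} \<and> b \<in> {1..m} \<and> P a} = {a\<in>{1..n}. P a} \<times> {1..m}" by auto
  then show ?thesis using card_rows_product[of n m "\<lambda>a b. P a"] by (simp add: card_cartesian_product)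
qed

lemma card_rows_row_snd: "card {j\<in>{1..n * m}. P (row_snd m j)} = n * card {b\<in>{1..m}. P b}"
proof -
  have "{(a, b). a \<in> {1..n} \<and> b \<in> {1..m} \<and> P b} = {1..n} \<times> {b\<in>{1..m}. P b}" by auto
  then show ?thesis using card_rows_product[of n m "\<lambda>a b. P b"] by (simp add: card_cartesian_product)
qed

lemma nth_map_upt_div_mod:
  assumes "a < p" "b < q"
  shows "map (\<lambda>t. f (t div q) (t mod q)) [0..<p * q] ! (a * q + b) = f a b"
proof -
  have "a * q + b < (a + 1) * q" using assms by simp
  also have "\<dots> \<le> p * q" using assms by (intro mult_right_mono) auto
  finally show ?thesis using assms by simp
qed

definition xor_sum :: "nat \<Rightarrow> ('a \<Rightarrow> bool list) \<Rightarrow> 'a set \<Rightarrow> bool list" where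
  "xor_sum L f A = map (\<lambda>i. odd (card {a\<in>A. f a ! i})) [0..<L]"

definition xor_recover :: "nat \<Rightarrow> bool list \<Rightarrow> ('a \<Rightarrow> bool list) \<Rightarrow> 'a set \<Rightarrow> bool list" where
  "xor_recover L x f A = map (\<lambda>i. x ! i \<noteq> xor_sum L f A ! i) [0..<L]"

lemma length_xor_sum [simp]: "length (xor_sum L f A) = L"
  by (simp add: xor_sum_def)

lemma length_xor_recover [simp]: "length (xor_recover L x f A) = L"
  by (simp add: xor_recover_def)

lemma xor_sum_cong: "(\<And>a. a \<in> A \<Longrightarrow> f a = g a) \<Longrightarrow> xor_sum L f A = xor_sum L g A"
proof -
  assume "\<And>a. a \<in> A \<Longrightarrow> f a = g a"
  then have "{a\<in>A. f a ! i} = {a\<in>A. g a ! i}" for i by auto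
  then show ?thesis by (simp add: xor_sum_def)
qed

lemma xor_recover_xor_sum:
  assumes "finite A" "t \<in> A" "length (f t) = L" "\<And>a. a \<in> A - {t} \<Longrightarrow> g a = f a"
  shows "xor_recover L (xor_sum L f A) g (A - {t}) = f t"
proof (rule nth_equalityI)
  fix i assume "i < length (xor_recover L (xor_sum L f A) g (A - {t}))"
  then have i: "i < L" by simp
  define R where "R = {a\<in>A - {t}. f a ! i}"
  have "{a\<in>A - {t}. g a ! i} = R" unfolding R_def using assms(4) by auto
  moreover have "{a\<in>A. f a ! i} = (if f t ! i then insert t R else R)"
    unfolding R_def using assms(2) by auto
  moreover have "finite R" "t \<notin> R" unfolding R_def using assms(1) by auto
  ultimately show "xor_recover L (xor_sum L f A) g (A - {t}) ! i = f t ! i"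
    using i by (simp add: xor_recover_def xor_sum_def)
qed (use assms in simp)

text \<open>By (C3), column \<open>k\<close> knows every other packet labelled \<open>s\<close>, because it has a star in its row.\<close>

lemma pda_xor_decode:
  assumes pda: "is_PDA K F Z S SS Q" and j: "j \<in> {1..F}" and k: "k \<in> {1..K}" and s: "Q j k = Val s"
    and len: "length (V j k) = L"
    and known: "\<And>j' k'. j' \<in> {1..F} \<Longrightarrow> k' \<in> {1..K} \<Longrightarrow> Q j' k = Star \<Longrightarrow> C j' k' = V j' k'"
  shows "xor_recover L (xor_sum L (case_prod V) (label_positions F K Q s)) (case_prod C)
           (label_positions F K Q s - {(j, k)}) = V j k"
proof -
  have jk: "(j, k) \<in> label_positions F K Q s" using j k s by (simp add: label_positions_def)
  have "xor_recover L (xor_sum L (case_prod V) (label_positions F K Q s)) (case_prod C)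
           (label_positions F K Q s - {(j, k)}) = case_prod V (j, k)"
  proof (rule xor_recover_xor_sum)
    fix x assume "x \<in> label_positions F K Q s - {(j, k)}"
    then obtain j' k' where x: "x = (j', k')" "j' \<in> {1..F}" "k' \<in> {1..K}" "Q j' k' = Val s"
      "(j', k') \<noteq> (j, k)" by (auto simp: label_positions_def)
    then have "Q j' k = Star" using pda_same_label[OF pda x(2) j x(3) k x(4) s] by blast
    then show "case_prod C x = case_prod V x" using x known by simp
  qed (use jk len in simp_all)
  then show ?thesis by simp
qed

definition shared_label :: "int \<Rightarrow> int \<Rightarrow> int" where
  "shared_label s1 s2 = - int (prod_encode (nat s1, nat s2)) - 1"

definition private_label :: "nat \<Rightarrow> nat \<Rightarrow> int \<Rightarrow> int" where
  "private_label k1 j1 s2 = int (prod_encode (k1, prod_encode (j1, nat s2)))"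

lemma shared_label_neg: "shared_label s1 s2 < 0"
  by (simp add: shared_label_def)

lemma private_label_nonneg: "0 \<le> private_label k1 j1 s2"
  by (simp add: private_label_def)

lemma shared_label_inject:
  "0 < s1 \<Longrightarrow> 0 < s2 \<Longrightarrow> 0 < s1' \<Longrightarrow> 0 < s2' \<Longrightarrow>
   shared_label s1 s2 = shared_label s1' s2' \<longleftrightarrow> s1 = s1' \<and> s2 = s2'"
  by (auto simp: shared_label_def prod_encode_eq)

lemma private_label_inject:
  "0 < s2 \<Longrightarrow> 0 < s2' \<Longrightarrow>
   private_label k1 j1 s2 = private_label k1' j1' s2' \<longleftrightarrow> k1 = k1' \<and> j1 = j1' \<and> s2 = s2'"
  by (auto simp: private_label_def prod_encode_eq)

locale pda_pair =
  fixes K1 F1 Z1 S1 K2 F2 Z2 S2 :: nat and QA QB :: "nat \<Rightarrow> nat \<Rightarrow> entry"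
  assumes pda_A: "is_PDA K1 F1 Z1 S1 {1..int S1} QA"
    and pda_B: "is_PDA K2 F2 Z2 S2 {1..int S2} QB"
begin

lemma QA_cases:
  "j1 \<in> {1..F1} \<Longrightarrow> k1 \<in> {1..K1} \<Longrightarrow> QA j1 k1 = Star \<or> (\<exists>s1\<in>{1..int S1}. QA j1 k1 = Val s1)"
  using pda_entry_cases[OF pda_A] by blast

lemma QB_cases:
  "j2 \<in> {1..F2} \<Longrightarrow> k2 \<in> {1..K2} \<Longrightarrow> QB j2 k2 = Star \<or> (\<exists>s2\<in>{1..int S2}. QB j2 k2 = Val s2)"
  using pda_entry_cases[OF pda_B] by blast

definition label :: "nat \<Rightarrow> nat \<Rightarrow> int \<Rightarrow> int" where
  "label k1 j1 s2 = (case QA j1 k1 of Star \<Rightarrow> private_label k1 j1 s2 | Val s1 \<Rightarrow> shared_label s1 s2)"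

definition sub_array :: "nat \<Rightarrow> nat \<Rightarrow> nat \<Rightarrow> entry" where
  "sub_array k1 j k2 =
     (case QB (row_snd F2 j) k2 of Star \<Rightarrow> Star | Val s2 \<Rightarrow> Val (label k1 (row_fst F2 j) s2))"

definition top_array :: "nat \<Rightarrow> nat \<Rightarrow> mentry" where
  "top_array j k1 = (if QA (row_fst F2 j) k1 = Star then MStar else MNull)"

definition sub_labels :: "nat \<Rightarrow> int set" where
  "sub_labels k1 = (\<lambda>(j1, s2). label k1 j1 s2) ` ({1..F1} \<times> {1..int S2})"

definition mirror_labels :: "int set" where
  "mirror_labels = (\<lambda>(k1, j1, s2). private_label k1 j1 s2) `
     {(k1, j1, s2). k1 \<in> {1..K1} \<and> j1 \<in> {1..F1} \<and> QA j1 k1 = Star \<and> s2 \<in> {1..int S2}}"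

definition shared_labels :: "int set" where
  "shared_labels = (\<lambda>(s1, s2). shared_label s1 s2) ` ({1..int S1} \<times> {1..int S2})"

lemma label_eq:
  assumes "k1 \<in> {1..K1}" "j1 \<in> {1..F1}" "s2 \<in> {1..int S2}"
    and "k1' \<in> {1..K1}" "j1' \<in> {1..F1}" "s2' \<in> {1..int S2}"
    and "label k1 j1 s2 = label k1' j1' s2'"
  shows "s2 = s2' \<and> (k1 = k1' \<and> j1 = j1' \<and> QA j1 k1 = Star \<or>
           (\<exists>s1. QA j1 k1 = Val s1 \<and> QA j1' k1' = Val s1))"
  using QA_cases[of j1 k1] QA_cases[of j1' k1'] assms
    shared_label_neg private_label_nonneg shared_label_inject private_label_inject
  by (auto simp: label_def) (metis not_le)+

lemma label_inj_on: "k1 \<in> {1..K1} \<Longrightarrow> inj_on (\<lambda>(j1, s2). label k1 j1 s2) ({1..F1} \<times> {1..int S2})"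
proof (rule inj_onI, clarify)
  fix j1 s2 j1' s2'
  assume k1: "k1 \<in> {1..K1}" and "j1 \<in> {1..F1}" "s2 \<in> {1..int S2}" "j1' \<in> {1..F1}" "s2' \<in> {1..int S2}"
    and "label k1 j1 s2 = label k1 j1' s2'"
  then have "s2 = s2' \<and> (j1 = j1' \<or> (\<exists>s1. QA j1 k1 = Val s1 \<and> QA j1' k1 = Val s1))"
    using label_eq[OF k1 _ _ k1] by blast
  then show "j1 = j1' \<and> s2 = s2'"
    using pda_same_label[OF pda_A \<open>j1 \<in> _\<close> \<open>j1' \<in> _\<close> k1 k1] by blast
qed

lemma card_sub_labels: "k1 \<in> {1..K1} \<Longrightarrow> card (sub_labels k1) = F1 * S2"
proof -
  assume "k1 \<in> {1..K1}"
  then have "card (sub_labels k1) = card ({1..F1} \<times> {1..int S2})"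
    unfolding sub_labels_def by (rule card_image[OF label_inj_on])
  then show ?thesis by (simp add: card_cartesian_product)
qed

lemma card_shared_labels: "card shared_labels = S1 * S2"
proof -
  have "inj_on (\<lambda>(s1, s2). shared_label s1 s2) ({1..int S1} \<times> {1..int S2})"
    by (rule inj_onI) (auto simp: shared_label_inject)
  then show ?thesis unfolding shared_labels_def by (simp add: card_image card_cartesian_product)
qed

lemma finite_mirror_labels: "finite mirror_labels"
proof -
  have "{(k1, j1, s2). k1 \<in> {1..K1} \<and> j1 \<in> {1..F1} \<and> QA j1 k1 = Star \<and> s2 \<in> {1..int S2}}
          \<subseteq> {1..K1} \<times> {1..F1} \<times> {1..int S2}" by auto
  then show ?thesis unfolding mirror_labels_def by (rule finite_imageI[OF finite_subset]) simp
qed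

lemma mirror_labels_disjoint_shared_labels: "mirror_labels \<inter> shared_labels = {}"
proof -
  have "x < 0" if "x \<in> shared_labels" for x
    using that shared_label_neg by (auto simp: shared_labels_def)
  moreover have "0 \<le> x" if "x \<in> mirror_labels" for x
    using that private_label_nonneg by (auto simp: mirror_labels_def)
  ultimately show ?thesis by fastforce
qed

lemma Union_sub_labels: "(\<Union>k1\<in>{1..K1}. sub_labels k1) = mirror_labels \<union> shared_labels"
proof (rule set_eqI, rule iffI)
  fix x assume "x \<in> (\<Union>k1\<in>{1..K1}. sub_labels k1)"
  then obtain k1 j1 s2 where h: "k1 \<in> {1..K1}" "j1 \<in> {1..F1}" "s2 \<in> {1..int S2}" "x = label k1 j1 s2"
    unfolding sub_labels_def by auto
  then consider "QA j1 k1 = Star" | s1 where "s1 \<in> {1..int S1}" "QA j1 k1 = Val s1"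
    using QA_cases by blast
  then show "x \<in> mirror_labels \<union> shared_labels"
  proof cases
    case 1
    then show ?thesis using h unfolding mirror_labels_def
      by (auto simp: label_def intro!: image_eqI[of _ _ "(k1, j1, s2)"])
  next
    case 2
    then show ?thesis using h unfolding shared_labels_def
      by (auto simp: label_def intro!: image_eqI[of _ _ "(s1, s2)"])
  qed
next
  fix x assume "x \<in> mirror_labels \<union> shared_labels"
  then show "x \<in> (\<Union>k1\<in>{1..K1}. sub_labels k1)"
  proof
    assume "x \<in> mirror_labels"
    then obtain k1 j1 s2 where "k1 \<in> {1..K1}" "j1 \<in> {1..F1}" "QA j1 k1 = Star" "s2 \<in> {1..int S2}"
      "x = label k1 j1 s2"
      unfolding mirror_labels_def by (auto simp: label_def)
    then show ?thesis unfolding sub_labels_def by blast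
  next
    assume "x \<in> shared_labels"
    then obtain s1 s2 where h: "s1 \<in> {1..int S1}" "s2 \<in> {1..int S2}" "x = shared_label s1 s2"
      unfolding shared_labels_def by auto
    then obtain j1 k1 where "j1 \<in> {1..F1}" "k1 \<in> {1..K1}" "QA j1 k1 = Val s1"
      using pda_label_occurs[OF pda_A] by blast
    then show ?thesis using h unfolding sub_labels_def by (force simp: label_def)
  qed
qed

lemma card_Union_sub_labels: "card (\<Union>k1\<in>{1..K1}. sub_labels k1) = card mirror_labels + S1 * S2"
proof -
  have "finite shared_labels" unfolding shared_labels_def by simp
  then show ?thesis
    unfolding Union_sub_labels
    using finite_mirror_labels mirror_labels_disjoint_shared_labels card_shared_labels
    by (simp add: card_Un_disjoint)
qed

lemma sub_array_eq_Star: "sub_array k1 j k2 = Star \<longleftrightarrow> QB (row_snd F2 j) k2 = Star"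
  by (cases "QB (row_snd F2 j) k2") (auto simp: sub_array_def)

lemma sub_array_eq_Val:
  "j \<in> {1..F1 * F2} \<Longrightarrow> k2 \<in> {1..K2} \<Longrightarrow> sub_array k1 j k2 = Val s \<Longrightarrow>
   \<exists>s2\<in>{1..int S2}. QB (row_snd F2 j) k2 = Val s2 \<and> s = label k1 (row_fst F2 j) s2"
  using QB_cases[of "row_snd F2 j" k2] row_fst_row_snd_in_range[of j F1 F2]
  by (auto simp: sub_array_def)

lemma sub_array_same_label:
  assumes k1: "k1 \<in> {1..K1}" and j: "j \<in> {1..F1 * F2}" "j' \<in> {1..F1 * F2}"
    and k2: "k2 \<in> {1..K2}" "k2' \<in> {1..K2}"
    and s: "sub_array k1 j k2 = Val s" "sub_array k1 j' k2' = Val s" and ne: "(j, k2) \<noteq> (j', k2')"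
  shows "j \<noteq> j' \<and> k2 \<noteq> k2' \<and> sub_array k1 j k2' = Star \<and> sub_array k1 j' k2 = Star"
proof -
  obtain s2 where s2: "s2 \<in> {1..int S2}" "QB (row_snd F2 j) k2 = Val s2" "s = label k1 (row_fst F2 j) s2"
    using sub_array_eq_Val[OF j(1) k2(1) s(1)] by blast
  obtain s2' where s2': "s2' \<in> {1..int S2}" "QB (row_snd F2 j') k2' = Val s2'"
    "s = label k1 (row_fst F2 j') s2'"
    using sub_array_eq_Val[OF j(2) k2(2) s(2)] by blast
  have R: "row_fst F2 j \<in> {1..F1}" "row_snd F2 j \<in> {1..F2}"
    "row_fst F2 j' \<in> {1..F1}" "row_snd F2 j' \<in> {1..F2}"
    using row_fst_row_snd_in_range j by auto
  have "s2 = s2' \<and> (row_fst F2 j = row_fst F2 j' \<or>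
      (\<exists>s1. QA (row_fst F2 j) k1 = Val s1 \<and> QA (row_fst F2 j') k1 = Val s1))"
    using label_eq[OF k1 R(1) s2(1) k1 R(3) s2'(1)] s2(3) s2'(3) by auto
  then have same_s2: "s2 = s2'" and same_row: "row_fst F2 j = row_fst F2 j'"
    using pda_same_label[OF pda_A R(1) R(3) k1 k1] by blast+
  have "(row_snd F2 j, k2) \<noteq> (row_snd F2 j', k2')"
    using ne same_row row_pair_row_fst_row_snd j by (metis Pair_inject atLeastAtMost_iff)
  then have "row_snd F2 j \<noteq> row_snd F2 j' \<and> k2 \<noteq> k2' \<and>
      QB (row_snd F2 j) k2' = Star \<and> QB (row_snd F2 j') k2 = Star"
    using pda_same_label[OF pda_B R(2) R(4) k2 s2(2)] s2'(2) same_s2 by blast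
  then show ?thesis by (auto simp: sub_array_eq_Star)
qed

lemma sub_array_is_PDA:
  assumes k1: "k1 \<in> {1..K1}"
  shows "is_PDA K2 (F1 * F2) (Z2 * F1) (card (sub_labels k1)) (sub_labels k1) (sub_array k1)"
proof -
  have entries: "\<forall>j\<in>{1..F1 * F2}. \<forall>k2\<in>{1..K2}.
      sub_array k1 j k2 = Star \<or> (\<exists>s\<in>sub_labels k1. sub_array k1 j k2 = Val s)"
  proof (intro ballI)
    fix j k2 assume jk: "j \<in> {1..F1 * F2}" "k2 \<in> {1..K2}"
    show "sub_array k1 j k2 = Star \<or> (\<exists>s\<in>sub_labels k1. sub_array k1 j k2 = Val s)"
    proof (cases "sub_array k1 j k2")
      case (Val s)
      then obtain s2 where "s2 \<in> {1..int S2}" "s = label k1 (row_fst F2 j) s2"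
        using sub_array_eq_Val[OF jk] by blast
      then have "s \<in> sub_labels k1"
        using row_fst_row_snd_in_range[OF jk(1)] unfolding sub_labels_def by force
      then show ?thesis using Val by blast
    qed simp
  qed
  have stars: "\<forall>k2\<in>{1..K2}. card {j\<in>{1..F1 * F2}. sub_array k1 j k2 = Star} = Z2 * F1"
  proof
    fix k2 assume "k2 \<in> {1..K2}"
    then show "card {j\<in>{1..F1 * F2}. sub_array k1 j k2 = Star} = Z2 * F1"
      using card_rows_row_snd[of F1 F2 "\<lambda>b. QB b k2 = Star"] pda_star_count[OF pda_B]
      by (simp add: sub_array_eq_Star)
  qed
  have occurs: "\<forall>s\<in>sub_labels k1. \<exists>j\<in>{1..F1 * F2}. \<exists>k2\<in>{1..K2}. sub_array k1 j k2 = Val s"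
  proof
    fix s assume "s \<in> sub_labels k1"
    then obtain j1 s2 where h: "j1 \<in> {1..F1}" "s2 \<in> {1..int S2}" "s = label k1 j1 s2"
      unfolding sub_labels_def by auto
    then obtain j2 k2 where "j2 \<in> {1..F2}" "k2 \<in> {1..K2}" "QB j2 k2 = Val s2"
      using pda_label_occurs[OF pda_B] by blast
    then have "sub_array k1 (row_pair F2 j1 j2) k2 = Val s" "row_pair F2 j1 j2 \<in> {1..F1 * F2}"
      using h row_pair_in_range by (auto simp: sub_array_def)
    then show "\<exists>j\<in>{1..F1 * F2}. \<exists>k2\<in>{1..K2}. sub_array k1 j k2 = Val s" using \<open>k2 \<in> _\<close> by blast
  qed
  have same_label: "\<forall>j\<in>{1..F1 * F2}. \<forall>j'\<in>{1..F1 * F2}. \<forall>k2\<in>{1..K2}. \<forall>k2'\<in>{1..K2}. \<forall>s.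
      sub_array k1 j k2 = Val s \<and> sub_array k1 j' k2' = Val s \<and> (j, k2) \<noteq> (j', k2') \<longrightarrow>
      j \<noteq> j' \<and> k2 \<noteq> k2' \<and> sub_array k1 j k2' = Star \<and> sub_array k1 j' k2 = Star"
    using sub_array_same_label[OF k1] by blast
  have "0 < K2" "0 < Z2" "0 < F1" "0 < F2" "0 < S2"
    using pda_positive[OF pda_A] pda_positive[OF pda_B] by auto
  then have "0 < Z2 * F1" "0 < F1 * F2" "0 < card (sub_labels k1)" "finite (sub_labels k1)"
    using card_sub_labels[OF k1] by (auto simp: sub_labels_def)
  then show ?thesis
    unfolding is_PDA_def using \<open>0 < K2\<close> entries stars occurs same_label
    by (intro conjI) (assumption | rule refl)+
qed


lemma top_array_star_count: "k1 \<in> {1..K1} \<Longrightarrow> card {j\<in>{1..F1 * F2}. top_array j k1 = MStar} = Z1 * F2"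
proof -
  assume "k1 \<in> {1..K1}"
  have "{j\<in>{1..F1 * F2}. top_array j k1 = MStar} = {j\<in>{1..F1 * F2}. QA (row_fst F2 j) k1 = Star}"
    by (auto simp: top_array_def)
  then show ?thesis
    using card_rows_row_fst[of F1 F2 "\<lambda>a. QA a k1 = Star"] pda_star_count[OF pda_A \<open>k1 \<in> _\<close>] by simp
qed

lemma mirror_label_in_one_subarray:
  assumes "s \<in> mirror_labels"
  shows "(\<exists>!k1. k1 \<in> {1..K1} \<and> (\<exists>j\<in>{1..F1 * F2}. \<exists>k2\<in>{1..K2}. sub_array k1 j k2 = Val s)) \<and>
    (\<forall>k1\<in>{1..K1}. \<forall>j\<in>{1..F1 * F2}. \<forall>k2\<in>{1..K2}. sub_array k1 j k2 = Val s \<longrightarrow> top_array j k1 = MStar)"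
proof -
  obtain k1 j1 s2 where h: "k1 \<in> {1..K1}" "j1 \<in> {1..F1}" "QA j1 k1 = Star" "s2 \<in> {1..int S2}"
    "s = private_label k1 j1 s2"
    using assms unfolding mirror_labels_def by auto
  then have s: "s = label k1 j1 s2" by (simp add: label_def)
  have only_k1: "k1' = k1 \<and> top_array j k1' = MStar"
    if hk: "k1' \<in> {1..K1}" "j \<in> {1..F1 * F2}" "k2 \<in> {1..K2}" "sub_array k1' j k2 = Val s" for k1' j k2
  proof -
    obtain s2' where "s2' \<in> {1..int S2}" "s = label k1' (row_fst F2 j) s2'"
      using sub_array_eq_Val hk(2-4) by blast
    moreover have "row_fst F2 j \<in> {1..F1}" using row_fst_row_snd_in_range[OF hk(2)] by blast
    ultimately have "k1 = k1' \<and> j1 = row_fst F2 j"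
      using label_eq[OF h(1,2,4) hk(1)] h(3) s by auto
    then show ?thesis using h(3) by (simp add: top_array_def)
  qed
  obtain j2 k2 where "j2 \<in> {1..F2}" "k2 \<in> {1..K2}" "QB j2 k2 = Val s2"
    using pda_label_occurs[OF pda_B] h(4) by blast
  then have "sub_array k1 (row_pair F2 j1 j2) k2 = Val s" "row_pair F2 j1 j2 \<in> {1..F1 * F2}"
    using h s row_pair_in_range by (auto simp: sub_array_def)
  then show ?thesis using h(1) \<open>k2 \<in> _\<close> only_k1 by blast
qed

lemma sub_arrays_common_label:
  assumes "k1 \<in> {1..K1}" "k1' \<in> {1..K1}" "k1 \<noteq> k1'"
    and "j \<in> {1..F1 * F2}" "j' \<in> {1..F1 * F2}" "k2 \<in> {1..K2}" "k2' \<in> {1..K2}"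
    and "sub_array k1 j k2 = Val s" "sub_array k1' j' k2' = Val s"
  shows "top_array j' k1 = MStar \<and> top_array j k1' = MStar"
proof -
  obtain s2 where s2: "s2 \<in> {1..int S2}" "s = label k1 (row_fst F2 j) s2"
    using sub_array_eq_Val assms by blast
  obtain s2' where s2': "s2' \<in> {1..int S2}" "s = label k1' (row_fst F2 j') s2'"
    using sub_array_eq_Val assms by blast
  have R: "row_fst F2 j \<in> {1..F1}" "row_fst F2 j' \<in> {1..F1}"
    using row_fst_row_snd_in_range assms(4,5) by auto
  from label_eq[OF assms(1) R(1) s2(1) assms(2) R(2) s2'(1)] s2(2) s2'(2) assms(3)
  obtain s1 where "QA (row_fst F2 j) k1 = Val s1" "QA (row_fst F2 j') k1' = Val s1" by auto
  then have "QA (row_fst F2 j') k1 = Star \<and> QA (row_fst F2 j) k1' = Star"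
    using pda_same_label[OF pda_A R assms(1,2)] assms(3) by auto
  then show ?thesis by (simp add: top_array_def)
qed

theorem is_HPDA_product:
  "is_HPDA K1 K2 (F1 * F2) (Z1 * F2) (Z2 * F1) mirror_labels sub_labels top_array sub_array"
proof -
  have "0 < K1" "0 < K2" "0 < F1" "0 < F2" "0 < Z1" "0 < Z2" "Z1 < F1" "Z2 < F2"
    using pda_positive[OF pda_A] pda_positive[OF pda_B]
      pda_star_count_less[OF pda_A] pda_star_count_less[OF pda_B] by auto
  then have sizes: "0 < K1" "0 < K2" "0 < F1 * F2" "0 < Z1 * F2" "0 < Z2 * F1"
      "Z1 * F2 < F1 * F2" "Z2 * F1 < F1 * F2"
    by auto
  have cross: "\<forall>k1\<in>{1..K1}. \<forall>k1'\<in>{1..K1}. \<forall>j\<in>{1..F1 * F2}. \<forall>j'\<in>{1..F1 * F2}.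
      \<forall>k2\<in>{1..K2}. \<forall>k2'\<in>{1..K2}. \<forall>s.
      k1 \<noteq> k1' \<and> sub_array k1 j k2 = Val s \<and> sub_array k1' j' k2' = Val s \<longrightarrow>
      (is_int_entry (sub_array k1 j' k2) \<longrightarrow> top_array j' k1 = MStar) \<and>
      (is_int_entry (sub_array k1' j k2') \<longrightarrow> top_array j k1' = MStar)"
  proof (intro ballI allI impI)
    fix k1 k1' j j' k2 k2' s
    assume "k1 \<in> {1..K1}" "k1' \<in> {1..K1}" "j \<in> {1..F1 * F2}" "j' \<in> {1..F1 * F2}"
      "k2 \<in> {1..K2}" "k2' \<in> {1..K2}"
      and "k1 \<noteq> k1' \<and> sub_array k1 j k2 = Val s \<and> sub_array k1' j' k2' = Val s"
    then show "(is_int_entry (sub_array k1 j' k2) \<longrightarrow> top_array j' k1 = MStar) \<and>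
      (is_int_entry (sub_array k1' j k2') \<longrightarrow> top_array j k1' = MStar)"
      using sub_arrays_common_label[of k1 k1' j j' k2 k2' s] by blast
  qed
  have "\<forall>k1\<in>{1..K1}. card {j\<in>{1..F1 * F2}. top_array j k1 = MStar} = Z1 * F2"
    using top_array_star_count by (intro ballI)
  moreover have "\<forall>k1\<in>{1..K1}. is_PDA K2 (F1 * F2) (Z2 * F1) (card (sub_labels k1)) (sub_labels k1) (sub_array k1)"
    using sub_array_is_PDA by (intro ballI)
  moreover have "\<forall>s\<in>mirror_labels.
      (\<exists>!k1. k1 \<in> {1..K1} \<and> (\<exists>j\<in>{1..F1 * F2}. \<exists>k2\<in>{1..K2}. sub_array k1 j k2 = Val s)) \<and>
      (\<forall>k1\<in>{1..K1}. \<forall>j\<in>{1..F1 * F2}. \<forall>k2\<in>{1..K2}. sub_array k1 j k2 = Val s \<longrightarrow> top_array j k1 = MStar)"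
    using mirror_label_in_one_subarray by (intro ballI)
  ultimately show ?thesis
    unfolding is_HPDA_def using sizes cross by (intro conjI) assumption+
qed

definition mirror_cache :: "nat \<Rightarrow> nat \<Rightarrow> (nat \<times> nat) set" where
  "mirror_cache N k1 = {(n, f). n \<in> {1..N} \<and> f \<in> {1..F1 * F2} \<and> QA (row_fst F2 f) k1 = Star}"

definition user_cache :: "nat \<Rightarrow> nat \<Rightarrow> (nat \<times> nat) set" where
  "user_cache N k2 = {(n, f). n \<in> {1..N} \<and> f \<in> {1..F1 * F2} \<and> QB (row_snd F2 f) k2 = Star}"

text \<open>The symbol mirror \<open>k1\<close> broadcasts for label \<open>s2\<close> of \<open>QB\<close> and row \<open>j1\<close> of \<open>QA\<close>; the server
  in turn XORs these symbols along the labels of \<open>QA\<close>.\<close>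

definition inner_code ::
    "nat \<Rightarrow> (nat \<Rightarrow> nat \<Rightarrow> nat) \<Rightarrow> (nat \<Rightarrow> nat \<Rightarrow> bool list) \<Rightarrow> nat \<Rightarrow> int \<Rightarrow> nat \<Rightarrow> bool list" where
  "inner_code L d W k1 s2 j1 =
     xor_sum L (\<lambda>(j2, k2). W (d k1 k2) (row_pair F2 j1 j2)) (label_positions F2 K2 QB s2)"

definition server_message ::
    "nat \<Rightarrow> (nat \<Rightarrow> nat \<Rightarrow> nat) \<Rightarrow> (nat \<Rightarrow> nat \<Rightarrow> bool list) \<Rightarrow> bool list list" where
  "server_message L d W =
     map (\<lambda>t. xor_sum L (\<lambda>(j1, k1). inner_code L d W k1 (int (t mod S2) + 1) j1)
                 (label_positions F1 K1 QA (int (t div S2) + 1)))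
       [0..<S1 * S2]"

definition mirror_symbol :: "nat \<Rightarrow> nat \<Rightarrow> (nat \<Rightarrow> nat \<Rightarrow> nat) \<Rightarrow> bool list list \<Rightarrow>
    (nat \<Rightarrow> nat \<Rightarrow> bool list) \<Rightarrow> int \<Rightarrow> nat \<Rightarrow> bool list" where
  "mirror_symbol L k1 d X C s2 j1 =
     (case QA j1 k1 of
        Star \<Rightarrow> inner_code L d C k1 s2 j1
      | Val s1 \<Rightarrow> xor_recover L (X ! ((nat s1 - 1) * S2 + (nat s2 - 1)))
                  (\<lambda>(j1', k1'). inner_code L d C k1' s2 j1') (label_positions F1 K1 QA s1 - {(j1, k1)}))"

definition mirror_message :: "nat \<Rightarrow> nat \<Rightarrow> (nat \<Rightarrow> nat \<Rightarrow> nat) \<Rightarrow> bool list list \<Rightarrow>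
    (nat \<Rightarrow> nat \<Rightarrow> bool list) \<Rightarrow> bool list list" where
  "mirror_message L k1 d X C =
     map (\<lambda>t. mirror_symbol L k1 d X C (int (t div F1) + 1) (t mod F1 + 1)) [0..<S2 * F1]"

definition user_decoder :: "nat \<Rightarrow> nat \<Rightarrow> nat \<Rightarrow> (nat \<Rightarrow> nat \<Rightarrow> nat) \<Rightarrow> bool list list \<Rightarrow>
    (nat \<Rightarrow> nat \<Rightarrow> bool list) \<Rightarrow> nat \<Rightarrow> bool list" where
  "user_decoder L k1 k2 d Y C f =
     (case QB (row_snd F2 f) k2 of
        Star \<Rightarrow> C (d k1 k2) f
      | Val s2 \<Rightarrow> xor_recover L (Y ! ((nat s2 - 1) * F1 + (row_fst F2 f - 1)))
                  (\<lambda>(j2', k2'). C (d k1 k2') (row_pair F2 (row_fst F2 f) j2'))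
                  (label_positions F2 K2 QB s2 - {(row_snd F2 f, k2)}))"

lemma length_mirror_symbol [simp]: "length (mirror_symbol L k1 d X C s2 j1) = L"
  by (cases "QA j1 k1") (simp_all add: mirror_symbol_def inner_code_def)

lemma server_message_nth:
  assumes "s1 \<in> {1..int S1}" "s2 \<in> {1..int S2}"
  shows "server_message L d W ! ((nat s1 - 1) * S2 + (nat s2 - 1)) =
    xor_sum L (\<lambda>(j1, k1). inner_code L d W k1 s2 j1) (label_positions F1 K1 QA s1)"
proof -
  define a b where "a = nat s1 - 1" and "b = nat s2 - 1"
  have "a < S1" "b < S2" "int a + 1 = s1" "int b + 1 = s2"
    using assms by (auto simp: a_def b_def)
  then show ?thesis
    unfolding server_message_def a_def[symmetric] b_def[symmetric]
    using nth_map_upt_div_mod[of a S1 b S2 "\<lambda>a b. xor_sum L (\<lambda>(j1, k1). inner_code L d W k1 (int b + 1) j1)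
      (label_positions F1 K1 QA (int a + 1))"] by simp
qed

lemma mirror_message_nth:
  assumes "s2 \<in> {1..int S2}" "j1 \<in> {1..F1}"
  shows "mirror_message L k1 d X C ! ((nat s2 - 1) * F1 + (j1 - 1)) = mirror_symbol L k1 d X C s2 j1"
proof -
  define a b where "a = nat s2 - 1" and "b = j1 - 1"
  have "a < S2" "b < F1" "int a + 1 = s2" "b + 1 = j1"
    using assms by (auto simp: a_def b_def)
  then show ?thesis
    unfolding mirror_message_def a_def[symmetric] b_def[symmetric]
    using nth_map_upt_div_mod[of a S2 b F1 "\<lambda>a b. mirror_symbol L k1 d X C (int a + 1) (b + 1)"] by simp
qed

lemma card_mirror_cache: "k1 \<in> {1..K1} \<Longrightarrow> card (mirror_cache N k1) = N * (Z1 * F2)"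
proof -
  assume k1: "k1 \<in> {1..K1}"
  have "mirror_cache N k1 = {1..N} \<times> {f\<in>{1..F1 * F2}. QA (row_fst F2 f) k1 = Star}"
    unfolding mirror_cache_def by auto
  then show ?thesis
    using card_rows_row_fst[of F1 F2 "\<lambda>a. QA a k1 = Star"] pda_star_count[OF pda_A k1]
    by (simp add: card_cartesian_product)
qed

lemma card_user_cache: "k2 \<in> {1..K2} \<Longrightarrow> card (user_cache N k2) = N * (Z2 * F1)"
proof -
  assume k2: "k2 \<in> {1..K2}"
  have "user_cache N k2 = {1..N} \<times> {f\<in>{1..F1 * F2}. QB (row_snd F2 f) k2 = Star}"
    unfolding user_cache_def by auto
  then show ?thesis
    using card_rows_row_snd[of F1 F2 "\<lambda>b. QB b k2 = Star"] pda_star_count[OF pda_B k2]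
    by (simp add: card_cartesian_product)
qed

context
  fixes N L d W
  assumes demand: "valid_demand K1 K2 N d" and library: "valid_library N (F1 * F2) L W"
begin

lemma demand_in_range: "k1 \<in> {1..K1} \<Longrightarrow> k2 \<in> {1..K2} \<Longrightarrow> d k1 k2 \<in> {1..N}"
  using demand unfolding valid_demand_def by blast

lemma inner_code_cache_content:
  assumes k1: "k1 \<in> {1..K1}" and j1: "j1 \<in> {1..F1}"
    and cached: "\<And>n f. n \<in> {1..N} \<Longrightarrow> f \<in> {1..F1 * F2} \<Longrightarrow> row_fst F2 f = j1 \<Longrightarrow> (n, f) \<in> Z"
  shows "inner_code L d (cache_content Z W) k1 s2 j1 = inner_code L d W k1 s2 j1"
  unfolding inner_code_def
proof (rule xor_sum_cong, clarify)
  fix j2 k2 assume "(j2, k2) \<in> label_positions F2 K2 QB s2"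
  then have "j2 \<in> {1..F2}" "k2 \<in> {1..K2}" by (auto simp: label_positions_def)
  then have "(d k1 k2, row_pair F2 j1 j2) \<in> Z"
    using cached demand_in_range[OF k1] row_pair_in_range[OF j1] j1 by simp
  then show "cache_content Z W (d k1 k2) (row_pair F2 j1 j2) = W (d k1 k2) (row_pair F2 j1 j2)"
    by (simp add: cache_content_def)
qed

lemma mirror_symbol_correct:
  assumes k1: "k1 \<in> {1..K1}" and j1: "j1 \<in> {1..F1}" and s2: "s2 \<in> {1..int S2}"
  shows "mirror_symbol L k1 d (server_message L d W) (cache_content (mirror_cache N k1) W) s2 j1 =
    inner_code L d W k1 s2 j1"
proof -
  have from_cache: "inner_code L d (cache_content (mirror_cache N k1) W) k1' s2 j1' = inner_code L d W k1' s2 j1'"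
    if "j1' \<in> {1..F1}" "k1' \<in> {1..K1}" "QA j1' k1 = Star" for j1' k1'
    using that by (intro inner_code_cache_content) (auto simp: mirror_cache_def)
  show ?thesis
  proof (cases "QA j1 k1")
    case Star
    then show ?thesis using from_cache[OF j1 k1] by (simp add: mirror_symbol_def)
  next
    case (Val s1)
    then have "s1 \<in> {1..int S1}" using QA_cases[OF j1 k1] by auto
    then show ?thesis
      using Val pda_xor_decode[OF pda_A j1 k1 Val, where V = "\<lambda>j1' k1'. inner_code L d W k1' s2 j1'"]
        from_cache server_message_nth s2
      by (simp add: mirror_symbol_def inner_code_def)
  qed
qed

lemma user_decoder_correct:
  assumes k1: "k1 \<in> {1..K1}" and k2: "k2 \<in> {1..K2}" and f: "f \<in> {1..F1 * F2}"
  shows "user_decoder L k1 k2 d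
           (mirror_message L k1 d (server_message L d W) (cache_content (mirror_cache N k1) W))
           (cache_content (user_cache N k2) W) f = W (d k1 k2) f"
proof -
  let ?j1 = "row_fst F2 f" and ?j2 = "row_snd F2 f"
  have R: "?j1 \<in> {1..F1}" "?j2 \<in> {1..F2}" using row_fst_row_snd_in_range[OF f] by auto
  have f_eq: "row_pair F2 ?j1 ?j2 = f" using f by simp
  show ?thesis
  proof (cases "QB ?j2 k2")
    case Star
    then have "(d k1 k2, f) \<in> user_cache N k2" using demand_in_range[OF k1 k2] f by (simp add: user_cache_def)
    then show ?thesis using Star by (simp add: user_decoder_def cache_content_def)
  next
    case (Val s2)
    then have s2: "s2 \<in> {1..int S2}" using QB_cases[OF R(2) k2] by auto
    have from_cache: "cache_content (user_cache N k2) W (d k1 k2') (row_pair F2 ?j1 j2') =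
        W (d k1 k2') (row_pair F2 ?j1 j2')"
      if "j2' \<in> {1..F2}" "k2' \<in> {1..K2}" "QB j2' k2 = Star" for j2' k2'
      using that demand_in_range[OF k1] row_pair_in_range[OF R(1)] R(1)
      by (simp add: user_cache_def cache_content_def)
    have "length (W (d k1 k2) (row_pair F2 ?j1 ?j2)) = L"
      using library demand_in_range[OF k1 k2] f_eq f unfolding valid_library_def by simp
    then show ?thesis
      using Val pda_xor_decode[OF pda_B R(2) k2 Val, where V = "\<lambda>j2' k2'. W (d k1 k2') (row_pair F2 ?j1 j2')"]
        from_cache mirror_message_nth[OF s2 R(1)] mirror_symbol_correct[OF k1 R(1) s2] f_eq
      by (simp add: user_decoder_def inner_code_def)
  qed
qed

end

theorem hier_scheme_product:
  assumes N: "K1 * K2 \<le> N" and B: "F1 * F2 dvd B"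
  shows "hier_scheme K1 K2 (real N * real Z1 / real F1) (real N * real Z2 / real F2) N B (F1 * F2)
           (real (S1 * S2) / real (F1 * F2)) (real S2 / real F2)"
proof -
  define L where "L = B div (F1 * F2)"
  have "0 < K1" "0 < K2" "0 < F1" "0 < F2"
    using pda_positive[OF pda_A] pda_positive[OF pda_B] by auto
  have B_eq: "real B = real F1 * real F2 * real L"
    using B unfolding L_def by (metis dvd_mult_div_cancel of_nat_mult)
  have mirror_memory: "\<forall>k1\<in>{1..K1}. mirror_cache N k1 \<subseteq> {1..N} \<times> {1..F1 * F2} \<and>
      real (card (mirror_cache N k1) * L) \<le> real N * real Z1 / real F1 * real B"
    using card_mirror_cache \<open>0 < F1\<close> by (auto simp: mirror_cache_def B_eq)
  have user_memory: "\<forall>k1\<in>{1..K1}. \<forall>k2\<in>{1..K2}. user_cache N k2 \<subseteq> {1..N} \<times> {1..F1 * F2} \<and>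
      real (card (user_cache N k2) * L) \<le> real N * real Z2 / real F2 * real B"
    using card_user_cache \<open>0 < F2\<close> by (auto simp: user_cache_def B_eq)
  have delivery: "\<forall>d W. valid_demand K1 K2 N d \<and> valid_library N (F1 * F2) L W \<longrightarrow>
      length (server_message L d W) = S1 * S2 \<and> (\<forall>x\<in>set (server_message L d W). length x = L) \<and>
      (\<forall>k1\<in>{1..K1}.
         length (mirror_message L k1 d (server_message L d W) (cache_content (mirror_cache N k1) W)) = S2 * F1 \<and>
         (\<forall>y\<in>set (mirror_message L k1 d (server_message L d W) (cache_content (mirror_cache N k1) W)).
            length y = L) \<and>
         (\<forall>k2\<in>{1..K2}. \<forall>f\<in>{1..F1 * F2}.
            user_decoder L k1 k2 d (mirror_message L k1 d (server_message L d W) (cache_content (mirror_cache N k1) W))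
              (cache_content (user_cache N k2) W) f = W (d k1 k2) f))"
    using user_decoder_correct by (auto simp: server_message_def mirror_message_def)
  have "0 < K1 * K2" using \<open>0 < K1\<close> \<open>0 < K2\<close> by simp
  then have "1 \<le> N" using N by linarith
  then have "valid_demand K1 K2 N (\<lambda>_ _. 1)" by (simp add: valid_demand_def)
  moreover have "1 \<in> {1..K1}" using \<open>0 < K1\<close> by simp
  moreover have "real (S2 * F1) / real (F1 * F2) = real S2 / real F2"
    using \<open>0 < F1\<close> by simp
  ultimately show ?thesis
    unfolding hier_scheme_def L_def[symmetric]
    using \<open>0 < F1\<close> \<open>0 < F2\<close> \<open>1 \<in> {1..K1}\<close> B mirror_memory user_memory delivery
    by (intro conjI exI[where x = "mirror_cache N"] exI[where x = "\<lambda>_ :: nat. user_cache N"]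
        exI[where x = "server_message L"] exI[where x = "\<lambda>d :: nat \<Rightarrow> nat \<Rightarrow> nat. S1 * S2"]
        exI[where x = "mirror_message L"] exI[where x = "\<lambda>(k1 :: nat) (d :: nat \<Rightarrow> nat \<Rightarrow> nat). S2 * F1"]
        exI[where x = "user_decoder L"]) auto
qed

end

theorem theorem3:
  fixes K1 F1 Z1 S1 K2 F2 Z2 S2 :: nat
    and QA QB :: "nat \<Rightarrow> nat \<Rightarrow> entry"
  assumes "is_PDA K1 F1 Z1 S1 {1..int S1} QA"
      and "is_PDA K2 F2 Z2 S2 {1..int S2} QB"
  shows "(\<exists>(Sm :: int set) (Ss :: nat \<Rightarrow> int set) P0 P.
            is_HPDA K1 K2 (F1 * F2) (Z1 * F2) (Z2 * F1) Sm Ss P0 P \<and>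
            int (card (\<Union>k1\<in>{1..K1}. Ss k1)) - int (card Sm) = int (S1 * S2) \<and>
            (\<forall>k1\<in>{1..K1}. card (Ss k1) = F1 * S2))
       \<and> (\<forall>N B. N \<ge> K1 * K2 \<and> 0 < B \<and> F1 * F2 dvd B \<longrightarrow>
            hier_scheme K1 K2 (real N * real Z1 / real F1) (real N * real Z2 / real F2) N B (F1 * F2)
              (real (S1 * S2) / real (F1 * F2)) (real S2 / real F2))"
proof -
  interpret pda_pair K1 F1 Z1 S1 K2 F2 Z2 S2 QA QB
    using assms by unfold_locales
  have "int (card (\<Union>k1\<in>{1..K1}. sub_labels k1)) - int (card mirror_labels) = int (S1 * S2)"
    using card_Union_sub_labels by simp
  then show ?thesis
    using is_HPDA_product card_sub_labels hier_scheme_product by blast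
qed

end
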